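(* Let $\mathcal{B}=(T,\bowtie)$ be a block of transactions and let $\mathcal S$ be a valid schedule of $\mathcal{B}$. Then the scheduling-graph scheduler $GBR$ run on $\mathcal S$ is sequentially deterministic: there exists a total order $\tau$ of $T$ such that, for every initial global state, every execution of $GBR$ on $\mathcal S$ from that state produces the same result for every transaction and the same final global state as executing the transactions of $T$ one at a time, without concurrency, in the order $\tau$ from that state.
   Context: A block is a finite set $T$ of transactions. Each transaction $tx$ operates on objects of a global state, is deterministic (its effect and returned result depend only on its input parameters and the values it reads), and is associated with a read-set $R(tx)$ and a write-set $W(tx)$ containing all objects it may read, respectively write, in any possible execution. Two distinct transactions $tx_1,tx_2$ conflict, written $tx_1\bowtie tx_2$, if $R(tx_1)\cap W(tx_2)\neq\emptyset$, or $W(tx_1)\cap R(tx_2)\neq\emptyset$, or $W(tx_1)\cap W(tx_2)\neq\emptyset$. A schedule is a set $\mathcal S\subseteq T\times T$ such that the directed graph $(T,\mathcal S)$ is acyclic; it is valid if for every pair $tx\bowtie tx'$ the graph $(T,\mathcal S)$ contains a directed path from $tx$ to $tx'$ or from $tx'$ to $tx$. The scheduler $GBR$ executes a schedule $\mathcal S$ by running each transaction in its own thread; the thread of $tx$ waits until every $tx'$ with $(tx',tx)\in\mathcal S$ has finished executing (signalled only after $tx'$ has completed), then reads the latest version of each object in $R(tx)$, executes $tx$, stores the new values of $W(tx)$, emits the result of $tx$, and signals all $tx''$ with $(tx,tx'')\in\mathcal S$. Transactions not ordered by such waiting may run concurrently. *)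

theory Defs
  imports Main
begin

(* Transactions are elements of type 't, objects of type 'o, values 'v, results 'r.
   R t / W t : read-set / write-set of transaction t.
   f t s = (new values, result): executing t on state s; the new value of object o
   is (fst (f t s)) o, used only for o in W t (all other objects keep their value). *)

definition conflict :: "('t \<Rightarrow> 'o set) \<Rightarrow> ('t \<Rightarrow> 'o set) \<Rightarrow> 't \<Rightarrow> 't \<Rightarrow> bool" where
  "conflict R W t1 t2 \<longleftrightarrow> t1 \<noteq> t2 \<and>
     (R t1 \<inter> W t2 \<noteq> {} \<or> W t1 \<inter> R t2 \<noteq> {} \<or> W t1 \<inter> W t2 \<noteq> {})"

definition schedule :: "'t set \<Rightarrow> ('t \<times> 't) set \<Rightarrow> bool" where
  "schedule T S \<longleftrightarrow> S \<subseteq> T \<times> T \<and> acyclic S"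

definition valid_schedule :: "('t \<Rightarrow> 'o set) \<Rightarrow> ('t \<Rightarrow> 'o set) \<Rightarrow> 't set \<Rightarrow> ('t \<times> 't) set \<Rightarrow> bool" where
  "valid_schedule R W T S \<longleftrightarrow> schedule T S \<and>
     (\<forall>t\<in>T. \<forall>t'\<in>T. conflict R W t t' \<longrightarrow> (t, t') \<in> S\<^sup>+ \<or> (t', t) \<in> S\<^sup>+)"

definition deterministic ::
  "'t set \<Rightarrow> ('t \<Rightarrow> 'o set) \<Rightarrow> ('t \<Rightarrow> ('o \<Rightarrow> 'v) \<Rightarrow> ('o \<Rightarrow> 'v) \<times> 'r) \<Rightarrow> bool" where
  "deterministic T R f \<longleftrightarrow>
     (\<forall>t\<in>T. \<forall>s s'. (\<forall>x\<in>R t. s x = s' x) \<longrightarrow> f t s = f t s')"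

definition apply_tx ::
  "('t \<Rightarrow> 'o set) \<Rightarrow> ('t \<Rightarrow> ('o \<Rightarrow> 'v) \<Rightarrow> ('o \<Rightarrow> 'v) \<times> 'r) \<Rightarrow> 't \<Rightarrow> ('o \<Rightarrow> 'v) \<Rightarrow> ('o \<Rightarrow> 'v)" where
  "apply_tx W f t s = (\<lambda>x. if x \<in> W t then fst (f t s) x else s x)"

definition seq_run ::
  "('t \<Rightarrow> 'o set) \<Rightarrow> ('t \<Rightarrow> ('o \<Rightarrow> 'v) \<Rightarrow> ('o \<Rightarrow> 'v) \<times> 'r) \<Rightarrow> 't list \<Rightarrow> ('o \<Rightarrow> 'v)
     \<Rightarrow> ('o \<Rightarrow> 'v) \<times> ('t \<Rightarrow> 'r option)" where
  "seq_run W f \<tau> s0 =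
     foldl (\<lambda>(s, res) t. (apply_tx W f t s, res(t := Some (snd (f t s))))) (s0, (\<lambda>_. None)) \<tau>"

(* Begin t : thread of t passes its waiting point;
   Rd t A  : thread of t reads the latest versions of the objects in A (atomically);
   Wr t B  : thread of t stores the new values of the objects in B (atomically);
   Fin t   : thread of t emits the result and signals its successors. *)
datatype ('t, 'o) event = Begin 't | Rd 't "'o set" | Wr 't "'o set" | Fin 't

fun ev_tx :: "('t, 'o) event \<Rightarrow> 't" where
  "ev_tx (Begin t) = t" | "ev_tx (Rd t A) = t" | "ev_tx (Wr t B) = t" | "ev_tx (Fin t) = t"

definition pairwise_disjoint_list :: "'a set list \<Rightarrow> bool" where
  "pairwise_disjoint_list As \<longleftrightarrow>
     (\<forall>i<length As. \<forall>j<length As. i \<noteq> j \<longrightarrow> As ! i \<inter> As ! j = {})"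

definition thread_ok ::
  "('t \<Rightarrow> 'o set) \<Rightarrow> ('t \<Rightarrow> 'o set) \<Rightarrow> 't \<Rightarrow> ('t, 'o) event list \<Rightarrow> bool" where
  "thread_ok R W t evs \<longleftrightarrow>
     (\<exists>As Bs. evs = [Begin t] @ map (Rd t) As @ map (Wr t) Bs @ [Fin t] \<and>
        pairwise_disjoint_list As \<and> \<Union>(set As) = R t \<and>
        pairwise_disjoint_list Bs \<and> \<Union>(set Bs) = W t)"

definition gbr_execution ::
  "('t \<Rightarrow> 'o set) \<Rightarrow> ('t \<Rightarrow> 'o set) \<Rightarrow> 't set \<Rightarrow> ('t \<times> 't) set \<Rightarrow> ('t, 'o) event list \<Rightarrow> bool" where
  "gbr_execution R W T S es \<longleftrightarrow>
     (\<forall>e\<in>set es. ev_tx e \<in> T) \<and>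
     (\<forall>t\<in>T. thread_ok R W t (filter (\<lambda>e. ev_tx e = t) es)) \<and>
     (\<forall>t' t i. (t', t) \<in> S \<longrightarrow> i < length es \<longrightarrow> es ! i = Begin t \<longrightarrow>
        (\<exists>j<i. es ! j = Fin t'))"

(* Configuration: global state, local read buffers of the threads, emitted results *)
fun gbr_step ::
  "('t \<Rightarrow> ('o \<Rightarrow> 'v) \<Rightarrow> ('o \<Rightarrow> 'v) \<times> 'r) \<Rightarrow>
   ('o \<Rightarrow> 'v) \<times> ('t \<Rightarrow> 'o \<Rightarrow> 'v) \<times> ('t \<Rightarrow> 'r option) \<Rightarrow> ('t, 'o) event \<Rightarrow>
   ('o \<Rightarrow> 'v) \<times> ('t \<Rightarrow> 'o \<Rightarrow> 'v) \<times> ('t \<Rightarrow> 'r option)" where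
  "gbr_step f (gs, loc, res) (Begin t) = (gs, loc, res)"
| "gbr_step f (gs, loc, res) (Rd t A) =
     (gs, loc(t := (\<lambda>x. if x \<in> A then gs x else loc t x)), res)"
| "gbr_step f (gs, loc, res) (Wr t B) =
     ((\<lambda>x. if x \<in> B then fst (f t (loc t)) x else gs x), loc, res)"
| "gbr_step f (gs, loc, res) (Fin t) = (gs, loc, res(t := Some (snd (f t (loc t)))))"

definition gbr_run ::
  "('t \<Rightarrow> ('o \<Rightarrow> 'v) \<Rightarrow> ('o \<Rightarrow> 'v) \<times> 'r) \<Rightarrow> ('t, 'o) event list \<Rightarrow> ('o \<Rightarrow> 'v)
     \<Rightarrow> ('o \<Rightarrow> 'v) \<times> ('t \<Rightarrow> 'r option)" where
  "gbr_run f es s0 =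
     (let (gs, loc, res) = foldl (gbr_step f) (s0, (\<lambda>_. s0), (\<lambda>_. None)) es in (gs, res))"

end

theory Submission
  imports Defs
begin

(* Take for \<tau> any linear extension of the acyclic schedule. By induction along \<tau>: the last
   transaction m of \<tau> has no S\<^sup>+-successor among the others, so whenever an event of m is
   followed in an execution by an event of another transaction u, the waiting discipline rules
   out a path from u to m as well; by validity m and u do not conflict, and the two events
   commute. Hence all events of m can be moved to the end of the execution, where the thread
   of m runs in isolation and, by determinism, acts exactly like m applied to the state left by
   the remaining execution, which is a GBR execution of the shorter order. *)

lemma filter_eq_Cons_nth_before:
  assumes "filter P xs = y # ys" "k < length xs" "P (xs ! k)"
  shows "\<exists>b\<le>k. xs ! b = y"
  using assms
proof (induction xs arbitrary: k)
  case Nil then show ?case by simp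
next
  case (Cons x xs)
  show ?case
  proof (cases "P x")
    case True then show ?thesis using Cons.prems(1) by auto
  next
    case False
    then obtain k' where k': "k = Suc k'" using Cons.prems(3) by (cases k) auto
    then obtain b where "b \<le> k'" "xs ! b = y"
      using Cons.IH[of k'] Cons.prems False by auto
    then show ?thesis using k' by (intro exI[of _ "Suc b"]) simp
  qed
qed

lemma filter_eq_snoc_nth_after:
  assumes "filter P xs = ys @ [y]" "y \<notin> set ys" "P y"
    and "k < length xs" "l < length xs" "P (xs ! k)" "xs ! l = y"
  shows "k \<le> l"
  using assms
proof (induction xs arbitrary: ys k l)
  case Nil then show ?case by simp
next
  case (Cons x xs)
  show ?case
  proof (cases k)
    case (Suc k')
    have ne: "filter P xs \<noteq> []"
      using Cons.prems(4,6) Suc by (auto simp: filter_empty_conv intro: nth_mem)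
    obtain ys' where ys': "filter P xs = ys' @ [y]" "y \<notin> set ys'"
    proof (cases "P x")
      case True
      with Cons.prems(1) ne obtain ys' where "ys = x # ys'" "filter P xs = ys' @ [y]"
        by (cases ys) auto
      then show ?thesis using that Cons.prems(2) by simp
    next
      case False
      then show ?thesis using that Cons.prems(1,2) by simp
    qed
    have "x \<noteq> y"
      using Cons.prems(1-3) ne by (cases ys) auto
    then obtain l' where l': "l = Suc l'"
      using Cons.prems(7) by (cases l) auto
    have "k' \<le> l'"
      using Cons.IH[OF ys' Cons.prems(3)] Cons.prems(4-7) Suc l' by simp
    then show ?thesis using Suc l' by simp
  qed simp
qed

lemma filter_preserves_occurs_before:
  assumes "\<forall>i<length xs. xs ! i = a \<longrightarrow> (\<exists>j<i. xs ! j = b)" "Q b"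
  shows "\<forall>i<length (filter Q xs). filter Q xs ! i = a \<longrightarrow> (\<exists>j<i. filter Q xs ! j = b)"
  using assms(1)
proof (induction xs)
  case Nil then show ?case by simp
next
  case (Cons x xs)
  have "x \<noteq> a" using Cons.prems by auto
  show ?case
  proof (cases "x = b")
    case True
    then show ?thesis using \<open>Q b\<close> \<open>x \<noteq> a\<close> by (auto simp: nth_Cons split: nat.split)
  next
    case False
    have "\<forall>i<length xs. xs ! i = a \<longrightarrow> (\<exists>j<i. xs ! j = b)"
    proof (intro allI impI)
      fix i assume "i < length xs" "xs ! i = a"
      then obtain j where "j < Suc i" "(x # xs) ! j = b" using Cons.prems by fastforce
      with False show "\<exists>j<i. xs ! j = b" by (cases j) auto
    qed
    then show ?thesis using Cons.IH \<open>x \<noteq> a\<close> by (auto simp: nth_Cons split: nat.split)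
  qed
qed

lemma foldl_commute_to_end:
  assumes "\<And>c y. y \<in> set ys \<Longrightarrow> g (g c x) y = g (g c y) x"
  shows "foldl g (g c x) ys = g (foldl g c ys) x"
  using assms by (induction ys arbitrary: c) simp_all

lemma foldl_filter_reorder:
  assumes "\<And>i j c. i < j \<Longrightarrow> j < length xs \<Longrightarrow> P (xs ! i) \<Longrightarrow> \<not> P (xs ! j) \<Longrightarrow>
      g (g c (xs ! i)) (xs ! j) = g (g c (xs ! j)) (xs ! i)"
  shows "foldl g c xs = foldl g c (filter (\<lambda>x. \<not> P x) xs @ filter P xs)"
  using assms
proof (induction xs arbitrary: c)
  case Nil then show ?case by simp
next
  case (Cons x xs)
  have IH: "foldl g c' xs = foldl g c' (filter (\<lambda>x. \<not> P x) xs @ filter P xs)" for c'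
    using Cons.prems[of "Suc i" "Suc j" for i j] by (intro Cons.IH) simp
  show ?case
  proof (cases "P x")
    case False then show ?thesis using IH by simp
  next
    case True
    have "g (g c x) y = g (g c y) x" if y: "y \<in> set (filter (\<lambda>x. \<not> P x) xs)" for c y
    proof -
      from y have "y \<in> set xs" "\<not> P y" by auto
      then obtain j where "j < length xs" "xs ! j = y" "\<not> P y"
        by (auto simp: in_set_conv_nth)
      then show ?thesis using Cons.prems[of 0 "Suc j"] True by simp
    qed
    then have "foldl g (g c x) (filter (\<lambda>x. \<not> P x) xs) = g (foldl g c (filter (\<lambda>x. \<not> P x) xs)) x"
      by (rule foldl_commute_to_end)
    then show ?thesis using IH True by simp
  qed
qed

lemma finite_acyclic_linear_extension:
  assumes "finite A" "finite r" "acyclic r"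
  shows "\<exists>xs. distinct xs \<and> set xs = A \<and> sorted_wrt (\<lambda>x y. (y, x) \<notin> r\<^sup>+) xs"
proof -
  have "acyclic (r\<^sup>+)" using assms(3) by (simp add: acyclic_def)
  then have wf: "wf ((r\<^sup>+)\<inverse>)" using assms(2) by (simp add: finite_acyclic_wf_converse)
  show ?thesis using assms(1)
  proof (induction A rule: finite_remove_induct)
    case empty then show ?case by simp
  next
    case (remove A)
    then obtain a where "a \<in> A" by blast
    then obtain z where z: "z \<in> A" "\<And>y. (z, y) \<in> r\<^sup>+ \<Longrightarrow> y \<notin> A"
      using wfE_min[OF wf] by (metis converse_iff)
    obtain xs where "distinct xs" "set xs = A - {z}" "sorted_wrt (\<lambda>x y. (y, x) \<notin> r\<^sup>+) xs"
      using remove.IH[OF z(1)] by blast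
    then show ?case using z by (intro exI[of _ "xs @ [z]"]) (auto simp: sorted_wrt_append)
  qed
qed

fun ev_reads :: "('t, 'o) event \<Rightarrow> 'o set" where
  "ev_reads (Rd t A) = A"
| "ev_reads _ = {}"

fun ev_writes :: "('t, 'o) event \<Rightarrow> 'o set" where
  "ev_writes (Wr t B) = B"
| "ev_writes _ = {}"

definition independent :: "('t, 'o) event \<Rightarrow> ('t, 'o) event \<Rightarrow> bool" where
  "independent e e' \<longleftrightarrow> ev_tx e \<noteq> ev_tx e' \<and>
     ev_reads e \<inter> ev_writes e' = {} \<and> ev_writes e \<inter> ev_reads e' = {} \<and>
     ev_writes e \<inter> ev_writes e' = {}"

lemma gbr_step_commute:
  assumes "independent e e'"
  shows "gbr_step f (gbr_step f c e) e' = gbr_step f (gbr_step f c e') e"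
proof -
  obtain gs loc res where "c = (gs, loc, res)" by (cases c)
  then show ?thesis using assms unfolding independent_def
    by (cases e; cases e') (auto simp: fun_eq_iff)
qed

lemma foldl_gbr_step_reads:
  "foldl (gbr_step f) (gs, loc, res) (map (Rd t) As) =
     (gs, loc(t := (\<lambda>x. if x \<in> \<Union>(set As) then gs x else loc t x)), res)"
  by (induction As arbitrary: loc) (auto simp: fun_eq_iff)

lemma foldl_gbr_step_writes:
  "foldl (gbr_step f) (gs, loc, res) (map (Wr t) Bs) =
     ((\<lambda>x. if x \<in> \<Union>(set Bs) then fst (f t (loc t)) x else gs x), loc, res)"
  by (induction Bs arbitrary: gs) (auto simp: fun_eq_iff)

lemma thread_ok_run:
  assumes "thread_ok R W t evs" "deterministic T R f" "t \<in> T"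
  shows "\<exists>loc'. foldl (gbr_step f) (gs, loc, res) evs =
           (apply_tx W f t gs, loc', res(t := Some (snd (f t gs))))"
proof -
  obtain As Bs where evs: "evs = [Begin t] @ map (Rd t) As @ map (Wr t) Bs @ [Fin t]"
    and reads: "\<Union>(set As) = R t" and writes: "\<Union>(set Bs) = W t"
    using assms(1) unfolding thread_ok_def by blast
  have reads_current: "f t (\<lambda>x. if x \<in> R t then gs x else loc t x) = f t gs"
    using assms(2,3) unfolding deterministic_def by auto
  show ?thesis unfolding evs
    by (simp only: foldl_append foldl.simps gbr_step.simps foldl_gbr_step_reads
        foldl_gbr_step_writes reads writes fun_upd_same reads_current apply_tx_def) blast
qed

lemma thread_ok_Begin_first:
  "thread_ok R W t evs \<Longrightarrow> \<exists>evs'. evs = Begin t # evs'"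
  unfolding thread_ok_def by auto

lemma thread_ok_Fin_last:
  "thread_ok R W t evs \<Longrightarrow> \<exists>evs'. evs = evs' @ [Fin t] \<and> Fin t \<notin> set evs'"
  unfolding thread_ok_def by auto

lemma thread_ok_event_sets:
  "thread_ok R W t evs \<Longrightarrow> e \<in> set evs \<Longrightarrow> ev_reads e \<subseteq> R t \<and> ev_writes e \<subseteq> W t"
  unfolding thread_ok_def by fastforce

lemma gbr_execution_thread:
  "gbr_execution R W T S es \<Longrightarrow> k < length es \<Longrightarrow>
     ev_tx (es ! k) \<in> T \<and> thread_ok R W (ev_tx (es ! k)) (filter (\<lambda>e. ev_tx e = ev_tx (es ! k)) es)"
  unfolding gbr_execution_def using nth_mem by blast

lemma gbr_execution_Begin_before:
  assumes "gbr_execution R W T S es" "k < length es"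
  shows "\<exists>b\<le>k. es ! b = Begin (ev_tx (es ! k))"
proof -
  obtain evs where "filter (\<lambda>e. ev_tx e = ev_tx (es ! k)) es = Begin (ev_tx (es ! k)) # evs"
    using gbr_execution_thread[OF assms] by (blast dest: thread_ok_Begin_first)
  then show ?thesis using assms(2) by (rule filter_eq_Cons_nth_before) simp
qed

lemma gbr_execution_Fin_after:
  assumes "gbr_execution R W T S es" "k < length es" "l < length es"
    and "es ! l = Fin (ev_tx (es ! k))"
  shows "k \<le> l"
proof -
  obtain evs where thread: "filter (\<lambda>e. ev_tx e = ev_tx (es ! k)) es = evs @ [Fin (ev_tx (es ! k))]"
      "Fin (ev_tx (es ! k)) \<notin> set evs"
    using gbr_execution_thread[OF assms(1,2)] by (blast dest: thread_ok_Fin_last)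
  show ?thesis using filter_eq_snoc_nth_after[OF thread _ assms(2,3)] assms(4) by simp
qed

lemma gbr_execution_waits:
  assumes "gbr_execution R W T S es" "(t', t) \<in> S" "i < length es" "ev_tx (es ! i) = t"
  shows "\<exists>j<i. es ! j = Fin t'"
proof -
  obtain b where "b \<le> i" "es ! b = Begin t"
    using gbr_execution_Begin_before[OF assms(1,3)] assms(4) by blast
  moreover have "b < length es" using \<open>b \<le> i\<close> assms(3) by simp
  ultimately obtain j where "j < b" "es ! j = Fin t'"
    using assms(1,2) unfolding gbr_execution_def by blast
  then show ?thesis using \<open>b \<le> i\<close> by (intro exI[of _ j]) simp
qed

lemma gbr_execution_precedes:
  assumes ex: "gbr_execution R W T S es" and "(u, m) \<in> S\<^sup>+"
    and "k < length es" "i < length es" "ev_tx (es ! k) = u" "ev_tx (es ! i) = m"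
  shows "k < i"
  using assms(2,4,6)
proof (induction arbitrary: i rule: trancl_induct)
  case (base m)
  then obtain j where j: "j < i" "es ! j = Fin u"
    using gbr_execution_waits[OF ex] by blast
  then have "k \<le> j"
    using gbr_execution_Fin_after[OF ex assms(3)] assms(5) base.prems(1) by simp
  with j show ?case by simp
next
  case (step y m)
  then obtain j where j: "j < i" "es ! j = Fin y"
    using gbr_execution_waits[OF ex] by blast
  then have "k < j"
    using step.IH step.prems(1) by simp
  with j show ?case by simp
qed

lemma gbr_execution_remove_last:
  assumes ex: "gbr_execution R W (insert m T) S es" and "m \<notin> T" "\<forall>t\<in>T. (m, t) \<notin> S"
  shows "gbr_execution R W T S (filter (\<lambda>e. ev_tx e \<noteq> m) es)"
  unfolding gbr_execution_def
proof (intro conjI ballI allI impI)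
  let ?es = "filter (\<lambda>e. ev_tx e \<noteq> m) es"
  have in_T: "ev_tx e \<in> T" if "e \<in> set ?es" for e
    using that ex unfolding gbr_execution_def by auto
  then show "ev_tx e \<in> T" if "e \<in> set ?es" for e
    using that by blast
  show "thread_ok R W t (filter (\<lambda>e. ev_tx e = t) ?es)" if "t \<in> T" for t
  proof -
    have "filter (\<lambda>e. ev_tx e = t) ?es = filter (\<lambda>e. ev_tx e = t) es"
      using that \<open>m \<notin> T\<close> by (auto simp: filter_filter intro: filter_cong)
    then show ?thesis using that ex unfolding gbr_execution_def by simp
  qed
  fix t' t i
  assume "(t', t) \<in> S" and i: "i < length ?es" "?es ! i = Begin t"
  moreover have "t \<in> T"
    using in_T[of "Begin t"] i nth_mem by fastforce
  ultimately show "\<exists>j<i. ?es ! j = Fin t'"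
    using filter_preserves_occurs_before[of es "Begin t" "Fin t'" "\<lambda>e. ev_tx e \<noteq> m"] ex assms(3)
    unfolding gbr_execution_def by auto
qed

lemma gbr_execution_event_sets:
  assumes "gbr_execution R W T S es" "k < length es"
  shows "ev_reads (es ! k) \<subseteq> R (ev_tx (es ! k)) \<and> ev_writes (es ! k) \<subseteq> W (ev_tx (es ! k))"
proof (rule thread_ok_event_sets)
  show "thread_ok R W (ev_tx (es ! k)) (filter (\<lambda>e. ev_tx e = ev_tx (es ! k)) es)"
    using gbr_execution_thread[OF assms] by blast
  show "es ! k \<in> set (filter (\<lambda>e. ev_tx e = ev_tx (es ! k)) es)"
    using assms(2) by simp
qed

lemma gbr_execution_independent_after:
  assumes ex: "gbr_execution R W T S es"
    and conflicts: "\<forall>t\<in>T. \<forall>t'\<in>T. conflict R W t t' \<longrightarrow> (t, t') \<in> S\<^sup>+ \<or> (t', t) \<in> S\<^sup>+"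
    and "i < j" "j < length es" "(ev_tx (es ! i), ev_tx (es ! j)) \<notin> S\<^sup>+"
    and "ev_tx (es ! i) \<noteq> ev_tx (es ! j)"
  shows "independent (es ! i) (es ! j)"
proof -
  let ?m = "ev_tx (es ! i)" and ?u = "ev_tx (es ! j)"
  have i: "i < length es" using assms(3,4) by simp
  have "(?u, ?m) \<notin> S\<^sup>+"
    using gbr_execution_precedes[OF ex _ assms(4) i] assms(3) by fastforce
  with assms(5) have "\<not> conflict R W ?m ?u"
    using conflicts gbr_execution_thread[OF ex i] gbr_execution_thread[OF ex assms(4)] by blast
  then show ?thesis
    using gbr_execution_event_sets[OF ex i] gbr_execution_event_sets[OF ex assms(4)] assms(6)
    unfolding independent_def conflict_def by blast
qed

lemma seq_run_snoc:
  "seq_run W f (\<tau> @ [t]) s0 =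
     (let (s, res) = seq_run W f \<tau> s0 in (apply_tx W f t s, res(t := Some (snd (f t s)))))"
  by (simp add: seq_run_def split: prod.split)

lemma gbr_run_eq_seq_run:
  assumes "distinct \<tau>" "sorted_wrt (\<lambda>t t'. (t', t) \<notin> S\<^sup>+) \<tau>"
    and "deterministic (set \<tau>) R f"
    and "\<forall>t\<in>set \<tau>. \<forall>t'\<in>set \<tau>. conflict R W t t' \<longrightarrow> (t, t') \<in> S\<^sup>+ \<or> (t', t) \<in> S\<^sup>+"
    and "gbr_execution R W (set \<tau>) S es"
  shows "gbr_run f es s0 = seq_run W f \<tau> s0"
  using assms
proof (induction \<tau> arbitrary: es rule: rev_induct)
  case Nil
  then have "es = []" unfolding gbr_execution_def by (cases es) auto
  then show ?case by (simp add: gbr_run_def seq_run_def)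
next
  case (snoc m \<tau>)
  note ex = snoc.prems(5)
  have m_last: "m \<notin> set \<tau>" "\<forall>t\<in>set \<tau>. (m, t) \<notin> S\<^sup>+"
    using snoc.prems(1,2) by (auto simp: sorted_wrt_append)
  let ?c0 = "(s0, \<lambda>_. s0, \<lambda>_. None)"
  have "foldl (gbr_step f) ?c0 es =
      foldl (gbr_step f) ?c0 (filter (\<lambda>e. ev_tx e \<noteq> m) es @ filter (\<lambda>e. ev_tx e = m) es)"
  proof (subst foldl_filter_reorder[where P = "\<lambda>e. ev_tx e = m"])
    fix i j c assume ij: "i < j" "j < length es" and tx: "ev_tx (es ! i) = m" "ev_tx (es ! j) \<noteq> m"
    then have "ev_tx (es ! j) \<in> set \<tau>"
      using gbr_execution_thread[OF ex ij(2)] by simp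
    then show "gbr_step f (gbr_step f c (es ! i)) (es ! j) = gbr_step f (gbr_step f c (es ! j)) (es ! i)"
      using gbr_execution_independent_after[OF ex snoc.prems(4) ij] tx m_last(2)
      by (intro gbr_step_commute) auto
  qed simp
  moreover obtain gs loc res
    where before_m: "foldl (gbr_step f) ?c0 (filter (\<lambda>e. ev_tx e \<noteq> m) es) = (gs, loc, res)"
    by (cases "foldl (gbr_step f) ?c0 (filter (\<lambda>e. ev_tx e \<noteq> m) es)")
  moreover have "seq_run W f \<tau> s0 = (gs, res)"
  proof -
    have "gbr_execution R W (set \<tau>) S (filter (\<lambda>e. ev_tx e \<noteq> m) es)"
      using ex m_last by (intro gbr_execution_remove_last) auto
    then have "gbr_run f (filter (\<lambda>e. ev_tx e \<noteq> m) es) s0 = seq_run W f \<tau> s0"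
      using snoc.IH snoc.prems(1-4) by (simp add: sorted_wrt_append deterministic_def)
    then show ?thesis using before_m by (simp add: gbr_run_def)
  qed
  moreover obtain loc' where "foldl (gbr_step f) (gs, loc, res) (filter (\<lambda>e. ev_tx e = m) es) =
      (apply_tx W f m gs, loc', res(m := Some (snd (f m gs))))"
  proof -
    have "thread_ok R W m (filter (\<lambda>e. ev_tx e = m) es)"
      using ex unfolding gbr_execution_def by simp
    then show ?thesis using thread_ok_run snoc.prems(3) that by fastforce
  qed
  ultimately show ?case by (simp add: gbr_run_def seq_run_snoc)
qed

theorem theorem1:
  fixes T :: "'t set" and S :: "('t \<times> 't) set"
    and R W :: "'t \<Rightarrow> 'o set"
    and f :: "'t \<Rightarrow> ('o \<Rightarrow> 'v) \<Rightarrow> ('o \<Rightarrow> 'v) \<times> 'r"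
  assumes "finite T"
    and "deterministic T R f"
    and "valid_schedule R W T S"
  shows "\<exists>\<tau>. distinct \<tau> \<and> set \<tau> = T \<and>
           (\<forall>s0 es. gbr_execution R W T S es \<longrightarrow> gbr_run f es s0 = seq_run W f \<tau> s0)"
proof -
  obtain "S \<subseteq> T \<times> T" "acyclic S"
    and conflicts: "\<forall>t\<in>T. \<forall>t'\<in>T. conflict R W t t' \<longrightarrow> (t, t') \<in> S\<^sup>+ \<or> (t', t) \<in> S\<^sup>+"
    using assms(3) unfolding valid_schedule_def schedule_def by blast
  then have "finite S" using assms(1) by (meson finite_SigmaI finite_subset)
  then obtain \<tau> where "distinct \<tau>" "set \<tau> = T" "sorted_wrt (\<lambda>t t'. (t', t) \<notin> S\<^sup>+) \<tau>"
    using finite_acyclic_linear_extension[OF assms(1)] \<open>acyclic S\<close> by blast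
  then show ?thesis
    using gbr_run_eq_seq_run assms(2) conflicts by blast
qed

end
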